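(* Let $G$ be a finite connected graph in which every half-edge is labeled with exactly one label from $\{\mathsf{L},\mathsf{R},\mathsf{P},\mathsf{Ch_L},\mathsf{Ch_R}\}$ such that every node satisfies the following constraints: (a) any two edges incident to a node $u$ have different labels at $u$; (b) for every edge $e=\{u,v\}$, $L_u(e)=\mathsf{L}$ iff $L_v(e)=\mathsf{R}$; (c) for every edge $e=\{u,v\}$, $L_u(e)=\mathsf{P}$ iff $L_v(e)\in\{\mathsf{Ch_L},\mathsf{Ch_R}\}$; (d) if $u$ has an incident edge $e=\{u,v\}$ with $L_u(e)=\mathsf{P}$ and $L_v(e)=\mathsf{Ch_L}$, then $f_u(\mathsf{P},\mathsf{Ch_R},\mathsf{L})=u$; (e) if $u$ has an incident edge $e=\{u,v\}$ with $L_u(e)=\mathsf{P}$ and $L_v(e)=\mathsf{Ch_R}$, and $u$ has an incident half-edge labeled $\mathsf{R}$, then $f_u(\mathsf{P},\mathsf{R},\mathsf{Ch_L},\mathsf{L})=u$; (f) a node has an incident half-edge labeled $\mathsf{Ch_L}$ iff it has one labeled $\mathsf{Ch_R}$; (g) a node has no incident half-edge labeled $\mathsf{P}$ iff it has no incident half-edges labeled $\mathsf{L}$ or $\mathsf{R}$; (h) if $u$ has no incident half-edge labeled $\mathsf{Ch_L}$ or $\mathsf{Ch_R}$, then neither do $f_u(\mathsf{L})$ and $f_u(\mathsf{R})$ (if they exist); (i) if $u$ has an incident edge $e=\{u,v\}$ with $L_u(e)=\mathsf{P}$ and $L_v(e)=\mathsf{Ch_R}$ (resp. $\mathsf{Ch_L}$),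 then $u$ has an incident half-edge labeled $\mathsf{R}$ (resp. $\mathsf{L}$) iff $f_u(\mathsf{P})$ has one. Then $G$ is a tree-like structure.
   Context: $L_u(e)$ denotes the label of half-edge $(u,e)$. For a node $u$ and labels $L_1,\dots,L_k$, $f_u(L_1,\dots,L_k)$ is the endpoint $v_{k+1}$ of the path $u=v_1,\dots,v_{k+1}$ where $v_{i+1}$ is reached from $v_i$ via the edge $e_i$ with $L_{v_i}(e_i)=L_i$, if this path exists and is unique; otherwise it is $\bot$ ("exists" means $\neq\bot$). A graph is a tree-like structure of height $\ell$ if its nodes can be assigned (distinct) coordinates $(l_u,k_u)$ with $0\le l_u<\ell$ and $0\le k_u<2^{l_u}$ such that for nodes $u,v$ with $l_v\le l_u$, $k_v\le k_u$ there is an edge $\{u,v\}$ iff $(l_v,k_v)=(l_u-1,\lfloor k_u/2\rfloor)$ or $(l_u,k_u)=(l_v,k_v+1)$. *)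

theory Defs
  imports Main
begin

datatype label = Lb | Rb | Pb | ChL | ChR

definition simple_graph :: "'a set \<Rightarrow> 'a set set \<Rightarrow> bool" where
  "simple_graph V E \<longleftrightarrow> finite V \<and>
     (\<forall>e\<in>E. \<exists>u v. e = {u, v} \<and> u \<noteq> v \<and> u \<in> V \<and> v \<in> V)"

definition connected_graph :: "'a set \<Rightarrow> 'a set set \<Rightarrow> bool" where
  "connected_graph V E \<longleftrightarrow>
     (\<forall>u\<in>V. \<forall>v\<in>V. (u, v) \<in> {(x, y). {x, y} \<in> E}\<^sup>*)"

text \<open>Half-edge (u,e) has label lab u e (meaningful when u \<in> e \<in> E).\<close>
definition has_label :: "'a set set \<Rightarrow> ('a \<Rightarrow> 'a set \<Rightarrow> label) \<Rightarrow> 'a \<Rightarrow> label \<Rightarrow> bool" where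
  "has_label E lab u l \<longleftrightarrow> (\<exists>e\<in>E. u \<in> e \<and> lab u e = l)"

definition label_walks :: "'a set set \<Rightarrow> ('a \<Rightarrow> 'a set \<Rightarrow> label) \<Rightarrow> 'a \<Rightarrow> label list \<Rightarrow> 'a list set" where
  "label_walks E lab u Ls = {ws. length ws = Suc (length Ls) \<and> ws ! 0 = u \<and>
     (\<forall>i < length Ls. {ws ! i, ws ! Suc i} \<in> E \<and> lab (ws ! i) {ws ! i, ws ! Suc i} = Ls ! i)}"

text \<open>f_u(L_1,...,L_k): endpoint of the unique such walk; None plays the role of \<bottom>.\<close>
definition fpath :: "'a set set \<Rightarrow> ('a \<Rightarrow> 'a set \<Rightarrow> label) \<Rightarrow> 'a \<Rightarrow> label list \<Rightarrow> 'a option" where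
  "fpath E lab u Ls = (if \<exists>!ws. ws \<in> label_walks E lab u Ls
      then Some (last (THE ws. ws \<in> label_walks E lab u Ls)) else None)"

definition valid_labeling :: "'a set \<Rightarrow> 'a set set \<Rightarrow> ('a \<Rightarrow> 'a set \<Rightarrow> label) \<Rightarrow> bool" where
  "valid_labeling V E lab \<longleftrightarrow>
   \<comment> \<open>(a)\<close>
   (\<forall>u e e'. e \<in> E \<and> e' \<in> E \<and> u \<in> e \<and> u \<in> e' \<and> e \<noteq> e' \<longrightarrow> lab u e \<noteq> lab u e') \<and>
   \<comment> \<open>(b)\<close>
   (\<forall>u v. {u, v} \<in> E \<longrightarrow> (lab u {u, v} = Lb \<longleftrightarrow> lab v {u, v} = Rb)) \<and>
   \<comment> \<open>(c)\<close>
   (\<forall>u v. {u, v} \<in> E \<longrightarrow> (lab u {u, v} = Pb \<longleftrightarrow> lab v {u, v} \<in> {ChL, ChR})) \<and>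
   \<comment> \<open>(d)\<close>
   (\<forall>u v. {u, v} \<in> E \<and> lab u {u, v} = Pb \<and> lab v {u, v} = ChL \<longrightarrow>
      fpath E lab u [Pb, ChR, Lb] = Some u) \<and>
   \<comment> \<open>(e)\<close>
   (\<forall>u v. {u, v} \<in> E \<and> lab u {u, v} = Pb \<and> lab v {u, v} = ChR \<and> has_label E lab u Rb \<longrightarrow>
      fpath E lab u [Pb, Rb, ChL, Lb] = Some u) \<and>
   \<comment> \<open>(f)\<close>
   (\<forall>u\<in>V. has_label E lab u ChL \<longleftrightarrow> has_label E lab u ChR) \<and>
   \<comment> \<open>(g)\<close>
   (\<forall>u\<in>V. \<not> has_label E lab u Pb \<longleftrightarrow> \<not> (has_label E lab u Lb \<or> has_label E lab u Rb)) \<and>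
   \<comment> \<open>(h)\<close>
   (\<forall>u\<in>V. \<not> has_label E lab u ChL \<and> \<not> has_label E lab u ChR \<longrightarrow>
      (\<forall>w l. l \<in> {Lb, Rb} \<and> fpath E lab u [l] = Some w \<longrightarrow>
          \<not> has_label E lab w ChL \<and> \<not> has_label E lab w ChR)) \<and>
   \<comment> \<open>(i)\<close>
   (\<forall>u v. {u, v} \<in> E \<and> lab u {u, v} = Pb \<and> lab v {u, v} = ChR \<longrightarrow>
      (has_label E lab u Rb \<longleftrightarrow> (\<exists>w. fpath E lab u [Pb] = Some w \<and> has_label E lab w Rb))) \<and>
   (\<forall>u v. {u, v} \<in> E \<and> lab u {u, v} = Pb \<and> lab v {u, v} = ChL \<longrightarrow>
      (has_label E lab u Lb \<longleftrightarrow> (\<exists>w. fpath E lab u [Pb] = Some w \<and> has_label E lab w Lb)))"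

text \<open>Tree-like structure of height h: distinct coordinates (l,k), l < h, k < 2^l;
  adjacency = parent/child or horizontal neighbours (k and k+1 on the same level).\<close>
definition tree_coord_adj :: "nat \<times> nat \<Rightarrow> nat \<times> nat \<Rightarrow> bool" where
  "tree_coord_adj cu cv \<longleftrightarrow>
     (fst cv + 1 = fst cu \<and> snd cv = snd cu div 2) \<or> (cu = (fst cv, snd cv + 1))"

definition tree_like :: "'a set \<Rightarrow> 'a set set \<Rightarrow> nat \<Rightarrow> bool" where
  "tree_like V E h \<longleftrightarrow> (\<exists>c :: 'a \<Rightarrow> nat \<times> nat.
     inj_on c V \<and> (\<forall>u\<in>V. fst (c u) < h \<and> snd (c u) < 2 ^ fst (c u)) \<and>
     (\<forall>u\<in>V. \<forall>v\<in>V. {u, v} \<in> E \<longleftrightarrow> tree_coord_adj (c u) (c v) \<or> tree_coord_adj (c v) (c u)))"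

definition tree_like_structure :: "'a set \<Rightarrow> 'a set set \<Rightarrow> bool" where
  "tree_like_structure V E \<longleftrightarrow> (\<exists>h. tree_like V E h)"

end

theory Submission
  imports Defs
begin

text \<open>
  Read P as the edge to the parent, ChL and ChR as the edges to the two children and
  L, R as the edges to the horizontal neighbours. Condition (d) makes the two children of a
  vertex neighbours, and (e) makes the right child of u and the left child of u's right
  neighbour neighbours. Hence the property ``a complete binary tree of depth n hangs below u''
  is invariant along L/R-edges and drops by one along P-edges.

  Some vertex r has no parent: otherwise the ancestors of a vertex whose complete depth is
  finite would be pairwise distinct, and if every vertex had children, counting children would
  give 2|V| \<le> |V|. Let D be the largest depth of a complete tree below r. Its vertices, addressed
  by (level, index), are pairwise distinct, are joined exactly as in a tree-like structure ((g)
  and (i) rule out L/R-edges leaving the boundary of a level), and every labelled edge leaving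
  them stays inside, so by connectedness they are all of V.
\<close>

definition coords :: "nat \<Rightarrow> (nat \<times> nat) set" where
  "coords h = {(l, k). l < h \<and> k < 2 ^ l}"

lemma tree_likeI:
  assumes bij: "bij_betw nd (coords h) V"
    and adj: "\<And>x y. x \<in> coords h \<Longrightarrow> y \<in> coords h \<Longrightarrow>
      {nd x, nd y} \<in> E \<longleftrightarrow> tree_coord_adj x y \<or> tree_coord_adj y x"
  shows "tree_like V E h"
proof -
  define c where "c = inv_into (coords h) nd"
  have c_bij: "bij_betw c V (coords h)"
    unfolding c_def using bij by (rule bij_betw_inv_into)
  have nd_c: "nd (c u) = u" if "u \<in> V" for u
    unfolding c_def using bij that by (rule bij_betw_inv_into_right)
  have "{u, v} \<in> E \<longleftrightarrow> tree_coord_adj (c u) (c v) \<or> tree_coord_adj (c v) (c u)"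
    if "u \<in> V" "v \<in> V" for u v
    using adj[of "c u" "c v"] bij_betwE[OF c_bij] that nd_c by simp
  moreover have "fst (c u) < h \<and> snd (c u) < 2 ^ fst (c u)" if "u \<in> V" for u
    using bij_betwE[OF c_bij] that by (auto simp: coords_def case_prod_unfold)
  ultimately show ?thesis
    unfolding tree_like_def using c_bij by (auto simp: bij_betw_def)
qed

locale labelled_graph =
  fixes V :: "'a set" and E :: "'a set set" and lab :: "'a \<Rightarrow> 'a set \<Rightarrow> label"
  assumes simple: "simple_graph V E" and valid: "valid_labeling V E lab"
begin

definition arc :: "'a \<Rightarrow> label \<Rightarrow> 'a \<Rightarrow> bool" where
  "arc u l v \<longleftrightarrow> {u, v} \<in> E \<and> lab u {u, v} = l"

lemma finite_V: "finite V"
  using simple by (simp add: simple_graph_def)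

lemma edge_endpoints: "{u, v} \<in> E \<Longrightarrow> u \<in> V \<and> v \<in> V \<and> u \<noteq> v"
  using simple by (fastforce simp: simple_graph_def doubleton_eq_iff)

lemma arc_endpoints: "arc u l v \<Longrightarrow> u \<in> V \<and> v \<in> V \<and> u \<noteq> v"
  using edge_endpoints unfolding arc_def by blast

lemma arc_target_unique:
  assumes "arc u l v" "arc u l w" shows "v = w"
proof -
  have "{u, v} = {u, w}"
    using valid assms unfolding arc_def valid_labeling_def by (elim conjE) blast
  then show ?thesis
    using arc_endpoints[OF assms(1)] by (auto simp: doubleton_eq_iff)
qed

lemma arc_label_unique: "arc u l v \<Longrightarrow> arc u l' v \<Longrightarrow> l = l'"
  by (simp add: arc_def)

lemma has_label_iff_arc: "has_label E lab u l \<longleftrightarrow> (\<exists>v. arc u l v)"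
proof
  assume "has_label E lab u l"
  then obtain e where e: "e \<in> E" "u \<in> e" "lab u e = l"
    by (auto simp: has_label_def)
  moreover obtain a b where "e = {a, b}"
    using simple e(1) by (auto simp: simple_graph_def)
  ultimately have "arc u l (if u = a then b else a)"
    unfolding arc_def by (auto simp: insert_commute)
  then show "\<exists>v. arc u l v" ..
qed (auto simp: has_label_def arc_def)

fun arc_path :: "'a \<Rightarrow> label list \<Rightarrow> 'a \<Rightarrow> bool" where
  "arc_path u [] w \<longleftrightarrow> w = u"
| "arc_path u (l # ls) w \<longleftrightarrow> (\<exists>v. arc u l v \<and> arc_path v ls w)"

lemma label_walks_Nil: "label_walks E lab u [] = {[u]}"
  by (auto simp: label_walks_def length_Suc_conv)

lemma label_walks_Cons:
  "ws \<in> label_walks E lab u (l # ls) \<longleftrightarrow>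
     (\<exists>v ws'. ws = u # ws' \<and> arc u l v \<and> ws' \<in> label_walks E lab v ls)"
  by (cases ws) (auto simp: label_walks_def arc_def All_less_Suc2)

lemma label_walks_unique:
  "ws \<in> label_walks E lab u ls \<Longrightarrow> ws' \<in> label_walks E lab u ls \<Longrightarrow> ws = ws'"
proof (induction ls arbitrary: u ws ws')
  case Nil
  then show ?case by (simp add: label_walks_Nil)
next
  case (Cons l ls)
  obtain v ws1 where "ws = u # ws1" "arc u l v" "ws1 \<in> label_walks E lab v ls"
    using Cons.prems(1) label_walks_Cons by blast
  moreover obtain v' ws1' where "ws' = u # ws1'" "arc u l v'" "ws1' \<in> label_walks E lab v' ls"
    using Cons.prems(2) label_walks_Cons by blast
  ultimately show ?case
    using Cons.IH arc_target_unique by blast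
qed

lemma label_walk_last_iff_arc_path:
  "(\<exists>ws \<in> label_walks E lab u ls. last ws = w) \<longleftrightarrow> arc_path u ls w"
proof (induction ls arbitrary: u)
  case Nil
  then show ?case by (auto simp: label_walks_Nil)
next
  case (Cons l ls)
  have nonempty: "ws \<noteq> []" if "ws \<in> label_walks E lab v ls" for v ws
    using that by (auto simp: label_walks_def)
  have "(\<exists>ws \<in> label_walks E lab u (l # ls). last ws = w) \<longleftrightarrow>
        (\<exists>v. arc u l v \<and> (\<exists>ws \<in> label_walks E lab v ls. last ws = w))"
  proof
    assume "\<exists>ws \<in> label_walks E lab u (l # ls). last ws = w"
    then obtain ws0 where ws0: "ws0 \<in> label_walks E lab u (l # ls)" "last ws0 = w" ..
    then obtain v ws where "ws0 = u # ws" "arc u l v" "ws \<in> label_walks E lab v ls"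
      using label_walks_Cons[of ws0] by blast
    with ws0(2) show "\<exists>v. arc u l v \<and> (\<exists>ws \<in> label_walks E lab v ls. last ws = w)"
      using nonempty by auto
  next
    assume "\<exists>v. arc u l v \<and> (\<exists>ws \<in> label_walks E lab v ls. last ws = w)"
    then obtain v ws where "arc u l v" "ws \<in> label_walks E lab v ls" "last ws = w"
      by blast
    then have "u # ws \<in> label_walks E lab u (l # ls)" "last (u # ws) = w"
      using label_walks_Cons[of "u # ws"] nonempty by auto
    then show "\<exists>ws \<in> label_walks E lab u (l # ls). last ws = w" ..
  qed
  then show ?case
    using Cons.IH by simp
qed

lemma fpath_eq_Some_iff: "fpath E lab u ls = Some w \<longleftrightarrow> arc_path u ls w"
proof -
  let ?W = "label_walks E lab u ls"
  have "fpath E lab u ls = Some w \<longleftrightarrow> (\<exists>ws \<in> ?W. last ws = w)"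
  proof
    assume some: "fpath E lab u ls = Some w"
    then have ex1: "\<exists>!ws. ws \<in> ?W"
      unfolding fpath_def by (simp split: if_splits)
    with some have "last (THE ws. ws \<in> ?W) = w"
      unfolding fpath_def by simp
    moreover have "(THE ws. ws \<in> ?W) \<in> ?W"
      using ex1 by (rule theI')
    ultimately show "\<exists>ws \<in> ?W. last ws = w" by blast
  next
    assume "\<exists>ws \<in> ?W. last ws = w"
    then obtain ws where ws: "ws \<in> ?W" "last ws = w" by blast
    then have ex1: "\<exists>!ws. ws \<in> ?W"
      using label_walks_unique by blast
    then have "(THE ws. ws \<in> ?W) = ws"
      using ws(1) by (rule the1_equality)
    with ex1 ws(2) show "fpath E lab u ls = Some w"
      unfolding fpath_def by simp
  qed
  then show ?thesis
    using label_walk_last_iff_arc_path by simp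
qed

lemma fpath_single_eq_Some_iff: "fpath E lab u [l] = Some w \<longleftrightarrow> arc u l w"
  by (simp add: fpath_eq_Some_iff)

lemma arc_L_iff_R: "arc u Lb v \<longleftrightarrow> arc v Rb u"
proof -
  have "\<forall>u v. {u, v} \<in> E \<longrightarrow> (lab u {u, v} = Lb \<longleftrightarrow> lab v {u, v} = Rb)"
    using valid unfolding valid_labeling_def by (elim conjE) assumption
  then show ?thesis
    unfolding arc_def by (auto simp: insert_commute)
qed

lemma arc_P_iff: "arc u Pb v \<longleftrightarrow> arc v ChL u \<or> arc v ChR u"
proof -
  have "\<forall>u v. {u, v} \<in> E \<longrightarrow> (lab u {u, v} = Pb \<longleftrightarrow> lab v {u, v} \<in> {ChL, ChR})"
    using valid unfolding valid_labeling_def by (elim conjE) assumption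
  then show ?thesis
    unfolding arc_def by (auto simp: insert_commute)
qed

lemma sibling_arc:
  assumes "arc p ChL a" "arc p ChR b"
  shows "arc a Rb b"
proof -
  have cond: "\<forall>u v. {u, v} \<in> E \<and> lab u {u, v} = Pb \<and> lab v {u, v} = ChL \<longrightarrow>
      fpath E lab u [Pb, ChR, Lb] = Some u"
    using valid unfolding valid_labeling_def by (elim conjE) assumption
  have ap: "arc a Pb p"
    using assms(1) arc_P_iff by blast
  then have "{a, p} \<in> E \<and> lab a {a, p} = Pb \<and> lab p {a, p} = ChL"
    using assms(1) by (simp add: arc_def insert_commute)
  from cond[rule_format, OF this]
  obtain b' where "arc p ChR b'" "arc b' Lb a"
    using ap unfolding fpath_eq_Some_iff by (auto dest: arc_target_unique)
  then show ?thesis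
    using assms(2) arc_target_unique arc_L_iff_R by blast
qed

lemma parent_has_R_iff:
  assumes "arc p ChR u"
  shows "(\<exists>y. arc u Rb y) \<longleftrightarrow> (\<exists>y. arc p Rb y)"
proof -
  have cond: "\<forall>u v. {u, v} \<in> E \<and> lab u {u, v} = Pb \<and> lab v {u, v} = ChR \<longrightarrow>
      (has_label E lab u Rb \<longleftrightarrow> (\<exists>w. fpath E lab u [Pb] = Some w \<and> has_label E lab w Rb))"
    using valid unfolding valid_labeling_def by (elim conjE) assumption
  have up: "arc u Pb p"
    using assms arc_P_iff by blast
  then have edge: "{u, p} \<in> E \<and> lab u {u, p} = Pb \<and> lab p {u, p} = ChR"
    using assms by (simp add: arc_def insert_commute)
  from cond[rule_format, OF edge]
  have "has_label E lab u Rb \<longleftrightarrow> (\<exists>w. arc u Pb w \<and> has_label E lab w Rb)"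
    by (simp only: fpath_single_eq_Some_iff)
  also have "\<dots> \<longleftrightarrow> has_label E lab p Rb"
    using up arc_target_unique by blast
  finally show ?thesis
    by (simp only: has_label_iff_arc)
qed

lemma parent_has_L_iff:
  assumes "arc p ChL u"
  shows "(\<exists>y. arc u Lb y) \<longleftrightarrow> (\<exists>y. arc p Lb y)"
proof -
  have cond: "\<forall>u v. {u, v} \<in> E \<and> lab u {u, v} = Pb \<and> lab v {u, v} = ChL \<longrightarrow>
      (has_label E lab u Lb \<longleftrightarrow> (\<exists>w. fpath E lab u [Pb] = Some w \<and> has_label E lab w Lb))"
    using valid unfolding valid_labeling_def by (elim conjE) assumption
  have up: "arc u Pb p"
    using assms arc_P_iff by blast
  then have edge: "{u, p} \<in> E \<and> lab u {u, p} = Pb \<and> lab p {u, p} = ChL"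
    using assms by (simp add: arc_def insert_commute)
  from cond[rule_format, OF edge]
  have "has_label E lab u Lb \<longleftrightarrow> (\<exists>w. arc u Pb w \<and> has_label E lab w Lb)"
    by (simp only: fpath_single_eq_Some_iff)
  also have "\<dots> \<longleftrightarrow> has_label E lab p Lb"
    using up arc_target_unique by blast
  finally show ?thesis
    by (simp only: has_label_iff_arc)
qed

lemma cousin_arc:
  assumes "arc p Rb q" "arc p ChR b" "arc q ChL c"
  shows "arc b Rb c"
proof -
  have cond: "\<forall>u v. {u, v} \<in> E \<and> lab u {u, v} = Pb \<and> lab v {u, v} = ChR \<and>
      has_label E lab u Rb \<longrightarrow> fpath E lab u [Pb, Rb, ChL, Lb] = Some u"
    using valid unfolding valid_labeling_def by (elim conjE) assumption
  have bp: "arc b Pb p"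
    using assms(2) arc_P_iff by blast
  moreover have "has_label E lab b Rb"
    using parent_has_R_iff[OF assms(2)] assms(1) by (auto simp: has_label_iff_arc)
  ultimately have "{b, p} \<in> E \<and> lab b {b, p} = Pb \<and> lab p {b, p} = ChR \<and> has_label E lab b Rb"
    using assms(2) by (simp add: arc_def insert_commute)
  from cond[rule_format, OF this]
  obtain q' c' where q': "arc p Rb q'" and c': "arc q' ChL c'" and "arc c' Lb b"
    using bp unfolding fpath_eq_Some_iff by (auto dest: arc_target_unique)
  moreover have "q' = q"
    using q' assms(1) arc_target_unique by blast
  ultimately have "c' = c"
    using assms(3) arc_target_unique by blast
  with \<open>arc c' Lb b\<close> show ?thesis
    using arc_L_iff_R by simp
qed

lemma ex_ChL_iff_ex_ChR:
  assumes "u \<in> V"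
  shows "(\<exists>x. arc u ChL x) \<longleftrightarrow> (\<exists>x. arc u ChR x)"
proof -
  have "\<forall>u\<in>V. has_label E lab u ChL \<longleftrightarrow> has_label E lab u ChR"
    using valid unfolding valid_labeling_def by (elim conjE) assumption
  then show ?thesis
    using assms by (simp add: has_label_iff_arc)
qed

lemma ex_P_iff_ex_L_or_R:
  assumes "u \<in> V"
  shows "(\<exists>p. arc u Pb p) \<longleftrightarrow> (\<exists>x. arc u Lb x) \<or> (\<exists>x. arc u Rb x)"
proof -
  have "\<forall>u\<in>V. \<not> has_label E lab u Pb \<longleftrightarrow> \<not> (has_label E lab u Lb \<or> has_label E lab u Rb)"
    using valid unfolding valid_labeling_def by (elim conjE) assumption
  then show ?thesis
    using assms unfolding has_label_iff_arc by blast
qed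

lemma childless_arc_LR:
  assumes "arc u l w" "l \<in> {Lb, Rb}" "\<not> (\<exists>x. arc u ChL x)"
  shows "\<not> (\<exists>x. arc w ChL x)"
proof -
  have cond: "\<forall>u\<in>V. \<not> has_label E lab u ChL \<and> \<not> has_label E lab u ChR \<longrightarrow>
      (\<forall>w l. l \<in> {Lb, Rb} \<and> fpath E lab u [l] = Some w \<longrightarrow>
          \<not> has_label E lab w ChL \<and> \<not> has_label E lab w ChR)"
    using valid unfolding valid_labeling_def by (elim conjE) assumption
  have "u \<in> V"
    using assms(1) arc_endpoints by blast
  moreover from this have "\<not> has_label E lab u ChL \<and> \<not> has_label E lab u ChR"
    using assms(3) ex_ChL_iff_ex_ChR by (simp add: has_label_iff_arc)
  moreover have "l \<in> {Lb, Rb} \<and> fpath E lab u [l] = Some w"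
    using assms(1,2) by (simp add: fpath_single_eq_Some_iff)
  ultimately have "\<not> has_label E lab w ChL"
    using cond by blast
  then show ?thesis
    by (simp add: has_label_iff_arc)
qed

definition has_children :: "'a \<Rightarrow> bool" where
  "has_children u \<longleftrightarrow> (\<exists>x. arc u ChL x)"

definition child :: "'a \<Rightarrow> label \<Rightarrow> 'a" where
  "child u s = (THE x. arc u s x)"

lemma child_eq: "arc u s x \<Longrightarrow> child u s = x"
  unfolding child_def using arc_target_unique by blast

lemma arc_child:
  assumes "has_children u" "s \<in> {ChL, ChR}"
  shows "arc u s (child u s)"
proof -
  obtain x where x: "arc u ChL x"
    using assms(1) has_children_def by blast
  moreover obtain y where "arc u ChR y"
    using ex_ChL_iff_ex_ChR arc_endpoints x by blast
  ultimately show ?thesis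
    using assms(2) child_eq by auto
qed

lemma arc_child_parent:
  assumes "has_children u" "s \<in> {ChL, ChR}"
  shows "arc (child u s) Pb u"
  using arc_child[OF assms] assms(2) arc_P_iff by auto

lemma has_children_parent: "arc u Pb p \<Longrightarrow> has_children p"
  using arc_P_iff ex_ChL_iff_ex_ChR arc_endpoints unfolding has_children_def by blast

lemma has_children_R_iff: "arc u Rb w \<Longrightarrow> has_children u \<longleftrightarrow> has_children w"
  using childless_arc_LR[of u Rb w] childless_arc_LR[of w Lb u] arc_L_iff_R
  unfolding has_children_def by blast

fun complete :: "nat \<Rightarrow> 'a \<Rightarrow> bool" where
  "complete 0 u \<longleftrightarrow> True"
| "complete (Suc n) u \<longleftrightarrow>
     has_children u \<and> complete n (child u ChL) \<and> complete n (child u ChR)"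

declare complete.simps(2) [simp del]

lemma complete_one: "complete (Suc 0) u \<longleftrightarrow> has_children u"
  by (simp add: complete.simps(2))

lemma complete_R_iff: "arc u Rb w \<Longrightarrow> complete n u \<longleftrightarrow> complete n w"
proof (induction n arbitrary: u w)
  case 0
  then show ?case by simp
next
  case (Suc n)
  show ?case
  proof (cases "has_children u")
    case True
    then have "has_children w"
      using has_children_R_iff Suc.prems by blast
    then have u: "arc u ChL (child u ChL)" "arc u ChR (child u ChR)"
      and w: "arc w ChL (child w ChL)" "arc w ChR (child w ChR)"
      using True arc_child by simp_all
    have "complete n (child u ChL) \<longleftrightarrow> complete n (child u ChR)"
      and "complete n (child u ChR) \<longleftrightarrow> complete n (child w ChL)"
      and "complete n (child w ChL) \<longleftrightarrow> complete n (child w ChR)"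
      using Suc.IH sibling_arc[OF u] cousin_arc[OF Suc.prems u(2) w(1)] sibling_arc[OF w]
      by blast+
    then show ?thesis
      using True \<open>has_children w\<close> by (auto simp: complete.simps(2))
  next
    case False
    then show ?thesis
      using has_children_R_iff Suc.prems by (simp add: complete.simps(2))
  qed
qed

lemma complete_parent:
  assumes "arc u Pb p"
  shows "complete (Suc n) p \<longleftrightarrow> complete n u"
proof -
  have p: "has_children p"
    using assms has_children_parent by blast
  then have "arc p ChL (child p ChL)" "arc p ChR (child p ChR)"
    using arc_child by simp_all
  then have "complete n (child p ChL) \<longleftrightarrow> complete n (child p ChR)"
    using complete_R_iff[OF sibling_arc] by blast
  moreover have "u = child p ChL \<or> u = child p ChR"
    using assms arc_P_iff child_eq by metis
  ultimately show ?thesis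
    using p by (auto simp: complete.simps(2))
qed

lemma complete_mono: "complete n u \<Longrightarrow> m \<le> n \<Longrightarrow> complete m u"
proof (induction n arbitrary: m u)
  case (Suc n)
  then show ?case by (cases m) (auto simp: complete.simps(2))
qed simp

lemma complete_exact_depth: "\<not> complete n u \<Longrightarrow> \<exists>d. complete d u \<and> \<not> complete (Suc d) u"
  by (induction n) auto

lemma complete_exact_depth_unique:
  assumes "complete d u" "\<not> complete (Suc d) u" "complete d' u" "\<not> complete (Suc d') u"
  shows "d = d'"
  using assms complete_mono by (metis Suc_leI linorder_neqE_nat)

lemma complete_if_all_have_parents:
  assumes parents: "\<forall>v\<in>V. \<exists>p. arc v Pb p" and "u \<in> V"
  shows "complete n u"
proof (rule ccontr)
  assume "\<not> complete n u"
  then obtain d where d: "complete d u" "\<not> complete (Suc d) u"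
    using complete_exact_depth by blast
  obtain par where par: "\<And>v. v \<in> V \<Longrightarrow> arc v Pb (par v)"
    using parents by metis
  define anc where "anc i = (par ^^ i) u" for i
  \<comment> \<open>the exact complete depth grows by one per step, so the ancestors are pairwise distinct\<close>
  have anc: "anc i \<in> V \<and> complete (d + i) (anc i) \<and> \<not> complete (Suc (d + i)) (anc i)" for i
  proof (induction i)
    case 0
    then show ?case using \<open>u \<in> V\<close> d by (simp add: anc_def)
  next
    case (Suc i)
    then have "arc (anc i) Pb (anc (Suc i))"
      using par by (simp add: anc_def)
    then show ?case
      using Suc.IH complete_parent[of "anc i" "anc (Suc i)"] arc_endpoints by simp
  qed
  have "inj anc"
    by (rule injI) (metis anc complete_exact_depth_unique add_left_cancel)
  moreover have "range anc \<subseteq> V"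
    using anc by auto
  ultimately show False
    using finite_V by (meson finite_imageD finite_subset infinite_UNIV_nat)
qed

lemma empty_if_all_have_children:
  assumes "\<forall>u\<in>V. has_children u"
  shows "V = {}"
proof -
  let ?f = "\<lambda>(p, s). child p s"
  have "inj_on ?f (V \<times> {ChL, ChR})"
  proof (rule inj_onI, clarify)
    fix p s p' s'
    assume "p \<in> V" "s \<in> {ChL, ChR}" "p' \<in> V" "s' \<in> {ChL, ChR}" "child p s = child p' s'"
    then have "arc (child p s) Pb p" "arc (child p s) Pb p'"
      "arc p s (child p s)" "arc p' s' (child p s)"
      using assms arc_child arc_child_parent by metis+
    then show "p = p' \<and> s = s'"
      using arc_target_unique arc_label_unique by blast
  qed
  moreover have "?f ` (V \<times> {ChL, ChR}) \<subseteq> V"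
    using assms arc_child arc_endpoints by fastforce
  ultimately have "card (V \<times> {ChL, ChR}) \<le> card V"
    using card_inj_on_le finite_V by blast
  then show ?thesis
    using finite_V by (simp add: card_cartesian_product)
qed

lemma root_exists:
  assumes "V \<noteq> {}"
  shows "\<exists>r\<in>V. \<not> (\<exists>p. arc r Pb p)"
proof (rule ccontr)
  assume "\<not> ?thesis"
  then have "\<forall>u\<in>V. has_children u"
    using complete_if_all_have_parents[where n = 1] by (simp add: complete_one)
  then show False
    using empty_if_all_have_children assms by blast
qed

end

definition child_side :: "nat \<Rightarrow> label" where
  "child_side k = (if even k then ChL else ChR)"

locale rooted_labelled_graph = labelled_graph +
  fixes r :: 'a and D :: nat
  assumes root_in_V: "r \<in> V"
    and root_no_parent: "\<not> (\<exists>p. arc r Pb p)"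
    and complete_root: "complete D r"
begin

text \<open>\<open>node l k\<close> is the vertex reached from \<open>r\<close> by following the binary digits of \<open>k\<close>
  (0 = left child, 1 = right child), most significant first, in \<open>l\<close> child steps.\<close>

fun node :: "nat \<Rightarrow> nat \<Rightarrow> 'a" where
  "node 0 k = r"
| "node (Suc l) k = child (node l (k div 2)) (child_side k)"

declare node.simps(2) [simp del]

lemma node_in_V_complete:
  "l \<le> D \<Longrightarrow> k < 2 ^ l \<Longrightarrow>
     node l k \<in> V \<and> (complete m (node l k) \<longleftrightarrow> complete (m + l) r)"
proof (induction l arbitrary: k m)
  case 0
  then show ?case using root_in_V by simp
next
  case (Suc l)
  let ?p = "node l (k div 2)"
  have IH: "?p \<in> V" "\<And>m. complete m ?p \<longleftrightarrow> complete (m + l) r"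
    using Suc.IH[of "k div 2"] Suc.prems by (simp_all add: less_mult_imp_div_less)
  have "has_children ?p"
    using IH(2)[of "Suc 0"] complete_mono[OF complete_root] Suc.prems by (simp add: complete_one)
  then have parent: "arc (node (Suc l) k) Pb ?p"
    using arc_child_parent by (simp add: child_side_def node.simps(2))
  then show ?case
    using IH(2)[of "Suc m"] complete_parent[OF parent, of m] arc_endpoints by simp
qed

lemma node_child_arcs:
  assumes "l < D" "k < 2 ^ Suc l"
  shows "arc (node l (k div 2)) (child_side k) (node (Suc l) k)"
    and "arc (node (Suc l) k) Pb (node l (k div 2))"
proof -
  have "complete (Suc 0 + l) r"
    using complete_mono[OF complete_root] assms(1) by simp
  then have "has_children (node l (k div 2))"
    using node_in_V_complete[of l "k div 2" "Suc 0"] assms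
    by (simp add: complete_one less_mult_imp_div_less)
  then show "arc (node l (k div 2)) (child_side k) (node (Suc l) k)"
    and "arc (node (Suc l) k) Pb (node l (k div 2))"
    using arc_child arc_child_parent by (simp_all add: child_side_def node.simps(2))
qed

lemma node_inj:
  assumes "l \<le> D" "k < 2 ^ l" "l' \<le> D" "k' < 2 ^ l'" "node l k = node l' k'"
  shows "l = l' \<and> k = k'"
  using assms
proof (induction l arbitrary: k l' k')
  case 0
  then show ?case
    using root_no_parent node_child_arcs(2)[of "l' - 1" k'] by (cases l') auto
next
  case (Suc l)
  then obtain m where l': "l' = Suc m"
    using root_no_parent node_child_arcs(2)[of l k] by (cases l') auto
  have "arc (node l' k') Pb (node m (k' div 2))"
    using node_child_arcs(2)[of m k'] Suc.prems(3,4) l' by simp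
  then have "arc (node (Suc l) k) Pb (node l (k div 2))" "arc (node (Suc l) k) Pb (node m (k' div 2))"
    using node_child_arcs(2)[of l k] Suc.prems by simp_all
  then have "l = m \<and> k div 2 = k' div 2"
    using Suc.IH[of "k div 2" m "k' div 2"] Suc.prems l' arc_target_unique
    by (auto simp: less_mult_imp_div_less)
  moreover have "arc (node l (k div 2)) (child_side k) (node (Suc l) k)"
    using node_child_arcs(1)[of l k] Suc.prems by simp
  moreover have "arc (node m (k' div 2)) (child_side k') (node (Suc l) k)"
    using node_child_arcs(1)[of m k'] Suc.prems(3-5) l' by simp
  ultimately have "child_side k = child_side k'"
    using arc_label_unique by simp
  then have "even k \<longleftrightarrow> even k'"
    by (auto simp: child_side_def split: if_splits)
  with \<open>l = m \<and> k div 2 = k' div 2\<close> have "k = k'"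
    by (metis div_mult_mod_eq odd_iff_mod_2_eq_one even_iff_mod_2_eq_zero)
  with \<open>l = m \<and> k div 2 = k' div 2\<close> show ?case
    using l' by simp
qed

lemma D_less_card_V: "D < card V"
proof -
  have "inj_on (\<lambda>l. node l 0) {..D}"
    by (rule inj_onI) (use node_inj[of _ 0 _ 0] in auto)
  moreover have "(\<lambda>l. node l 0) ` {..D} \<subseteq> V"
    using node_in_V_complete by auto
  ultimately have "card {..D} \<le> card V"
    using card_inj_on_le finite_V by blast
  then show ?thesis by simp
qed

lemma node_R_arc: "l \<le> D \<Longrightarrow> Suc k < 2 ^ l \<Longrightarrow> arc (node l k) Rb (node l (Suc k))"
proof (induction l arbitrary: k)
  case 0
  then show ?case by simp
next
  case (Suc l)
  have k: "arc (node l (k div 2)) (child_side k) (node (Suc l) k)"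
    and Suc_k: "arc (node l (Suc k div 2)) (child_side (Suc k)) (node (Suc l) (Suc k))"
    using node_child_arcs(1) Suc.prems by auto
  show ?case
  proof (cases "even k")
    case True
    then show ?thesis
      using sibling_arc k Suc_k by (simp add: child_side_def)
  next
    case False
    then have "Suc (k div 2) < 2 ^ l"
      using Suc.prems(2) by (auto elim!: oddE)
    then have "arc (node l (k div 2)) Rb (node l (Suc (k div 2)))"
      using Suc by simp
    moreover have "arc (node l (k div 2)) ChR (node (Suc l) k)"
      and "arc (node l (Suc (k div 2))) ChL (node (Suc l) (Suc k))"
      using k Suc_k False by (simp_all add: child_side_def)
    ultimately show ?thesis
      by (rule cousin_arc)
  qed
qed

lemma node_first_no_L: "l \<le> D \<Longrightarrow> \<not> (\<exists>y. arc (node l 0) Lb y)"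
proof (induction l)
  case 0
  then show ?case
    using root_no_parent ex_P_iff_ex_L_or_R root_in_V by simp
next
  case (Suc l)
  then show ?case
    using parent_has_L_iff node_child_arcs(1)[of l 0] by (simp add: child_side_def)
qed

lemma node_last_no_R: "l \<le> D \<Longrightarrow> \<not> (\<exists>y. arc (node l (2 ^ l - 1)) Rb y)"
proof (induction l)
  case 0
  then show ?case
    using root_no_parent ex_P_iff_ex_L_or_R root_in_V by simp
next
  case (Suc l)
  have "(1::nat) \<le> 2 ^ l" "(2::nat) ^ Suc l = 2 * 2 ^ l"
    by simp_all
  then have "odd (2 ^ Suc l - 1 :: nat)" "(2 ^ Suc l - 1) div 2 = (2 ^ l - 1 :: nat)"
    "2 ^ Suc l - 1 < (2 ^ Suc l :: nat)"
    by presburger+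
  then have "arc (node l (2 ^ l - 1)) ChR (node (Suc l) (2 ^ Suc l - 1))"
    using node_child_arcs(1)[of l "2 ^ Suc l - 1"] Suc.prems by (simp add: child_side_def)
  then show ?case
    using Suc parent_has_R_iff by simp
qed

lemma node_arc_L:
  assumes "l \<le> D" "k < 2 ^ l" "arc (node l k) Lb w"
  shows "0 < k \<and> w = node l (k - 1)"
proof -
  have "k \<noteq> 0"
  proof
    assume "k = 0"
    with assms(3) node_first_no_L[OF assms(1)] show False by blast
  qed
  then have "arc (node l (k - 1)) Rb (node l k)"
    using node_R_arc[of l "k - 1"] assms(1,2) by simp
  then have "arc (node l k) Lb (node l (k - 1))"
    by (simp add: arc_L_iff_R)
  with \<open>k \<noteq> 0\<close> show ?thesis
    using arc_target_unique[OF assms(3)] by blast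
qed

lemma node_arc_R:
  assumes "l \<le> D" "k < 2 ^ l" "arc (node l k) Rb w"
  shows "Suc k < 2 ^ l \<and> w = node l (Suc k)"
proof -
  have "k \<noteq> 2 ^ l - 1"
  proof
    assume "k = 2 ^ l - 1"
    with assms(3) node_last_no_R[OF assms(1)] show False by blast
  qed
  then have "Suc k < 2 ^ l"
    using assms(2) by linarith
  moreover from this have "arc (node l k) Rb (node l (Suc k))"
    using node_R_arc assms(1) by blast
  ultimately show ?thesis
    using arc_target_unique[OF assms(3)] by blast
qed

lemma node_arc_P:
  assumes "l \<le> D" "k < 2 ^ l" "arc (node l k) Pb w"
  shows "0 < l \<and> w = node (l - 1) (k div 2)"
proof (cases l)
  case 0
  then show ?thesis
    using assms(3) root_no_parent by auto
next
  case (Suc m)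
  then have "arc (node l k) Pb (node m (k div 2))"
    using assms(1,2) node_child_arcs(2)[of m k] by simp
  then have "w = node m (k div 2)"
    by (rule arc_target_unique[OF assms(3)])
  with Suc show ?thesis
    by simp
qed

lemma adjacent_node_edge:
  assumes "l \<le> D" "k < 2 ^ l" "l' \<le> D" "k' < 2 ^ l'" "tree_coord_adj (l, k) (l', k')"
  shows "{node l k, node l' k'} \<in> E"
proof -
  consider "l = Suc l'" "k' = k div 2" | "l' = l" "k = Suc k'"
    using assms(5) by (auto simp: tree_coord_adj_def)
  then show ?thesis
  proof cases
    case 1
    then have "arc (node l k) Pb (node l' k')"
      using node_child_arcs(2)[of l' k] assms(1,2) by simp
    then show ?thesis
      by (simp add: arc_def)
  next
    case 2
    then have "arc (node l k') Rb (node l k)"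
      using node_R_arc[of l k'] assms(1,2) by simp
    then show ?thesis
      using 2 by (simp add: arc_def insert_commute)
  qed
qed

end

lemma (in labelled_graph) root_eventually_incomplete:
  assumes "r \<in> V" "\<not> (\<exists>p. arc r Pb p)"
  shows "\<exists>n. \<not> complete n r"
proof (rule ccontr)
  assume "\<not> ?thesis"
  then have "complete (card V) r" by blast
  then interpret rooted_labelled_graph V E lab r "card V"
    using assms by unfold_locales
  show False
    using D_less_card_V by simp
qed

locale rooted_labelled_graph_exact = rooted_labelled_graph +
  assumes root_incomplete: "\<not> complete (Suc D) r"
begin

lemma node_has_children_iff:
  assumes "l \<le> D" "k < 2 ^ l"
  shows "has_children (node l k) \<longleftrightarrow> l < D"
proof -
  have "has_children (node l k) \<longleftrightarrow> complete (Suc l) r"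
    using node_in_V_complete[OF assms, of "Suc 0"] by (simp add: complete_one)
  also have "\<dots> \<longleftrightarrow> l < D"
    using complete_mono[OF complete_root, of "Suc l"] root_incomplete assms(1)
    by (metis Suc_leI le_neq_implies_less)
  finally show ?thesis .
qed

lemma node_arc_child:
  assumes "l \<le> D" "k < 2 ^ l" "s \<in> {ChL, ChR}" "arc (node l k) s w"
  shows "l < D \<and> (w = node (Suc l) (2 * k) \<or> w = node (Suc l) (Suc (2 * k)))"
proof -
  have "has_children (node l k)"
    using assms(3,4) ex_ChL_iff_ex_ChR arc_endpoints unfolding has_children_def by blast
  then have "l < D"
    using node_has_children_iff assms(1,2) by blast
  then have "arc (node l k) ChL (node (Suc l) (2 * k))"
    and "arc (node l k) ChR (node (Suc l) (Suc (2 * k)))"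
    using node_child_arcs(1)[of l "2 * k"] node_child_arcs(1)[of l "Suc (2 * k)"] assms(2)
    by (simp_all add: child_side_def)
  with \<open>l < D\<close> show ?thesis
    using assms(3) arc_target_unique[OF assms(4)] by blast
qed

lemma node_arc_adjacent:
  assumes "l \<le> D" "k < 2 ^ l" "arc (node l k) s w"
  obtains l' k' where "l' \<le> D" "k' < 2 ^ l'" "w = node l' k'"
    "tree_coord_adj (l, k) (l', k') \<or> tree_coord_adj (l', k') (l, k)"
proof (cases s)
  case Lb
  then have "0 < k" "w = node l (k - 1)"
    using node_arc_L assms by blast+
  then show ?thesis
    using assms(1,2) by (intro that[of l "k - 1"]) (auto simp: tree_coord_adj_def)
next
  case Rb
  then have "Suc k < 2 ^ l" "w = node l (Suc k)"
    using node_arc_R assms by blast+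
  then show ?thesis
    using assms(1) by (intro that[of l "Suc k"]) (auto simp: tree_coord_adj_def)
next
  case Pb
  then have "0 < l" "w = node (l - 1) (k div 2)"
    using node_arc_P assms by blast+
  moreover have "k div 2 < 2 ^ (l - 1)"
    using assms(2) \<open>0 < l\<close> by (cases l) (simp_all add: less_mult_imp_div_less)
  ultimately show ?thesis
    using assms(1) by (intro that[of "l - 1" "k div 2"]) (auto simp: tree_coord_adj_def)
next
  case ChL
  then have "l < D" "w = node (Suc l) (2 * k) \<or> w = node (Suc l) (Suc (2 * k))"
    using node_arc_child assms by blast+
  then show ?thesis
    using assms(2) by (elim disjE; intro that[of "Suc l"]) (auto simp: tree_coord_adj_def)
next
  case ChR
  then have "l < D" "w = node (Suc l) (2 * k) \<or> w = node (Suc l) (Suc (2 * k))"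
    using node_arc_child assms by blast+
  then show ?thesis
    using assms(2) by (elim disjE; intro that[of "Suc l"]) (auto simp: tree_coord_adj_def)
qed

lemma edge_nodes_iff_adjacent:
  assumes "l \<le> D" "k < 2 ^ l" "l' \<le> D" "k' < 2 ^ l'"
  shows "{node l k, node l' k'} \<in> E \<longleftrightarrow>
    tree_coord_adj (l, k) (l', k') \<or> tree_coord_adj (l', k') (l, k)"
proof
  assume "{node l k, node l' k'} \<in> E"
  then have "arc (node l k) (lab (node l k) {node l k, node l' k'}) (node l' k')"
    by (simp add: arc_def)
  then obtain l2 k2 where "l2 \<le> D" "k2 < 2 ^ l2" "node l' k' = node l2 k2"
    and adj: "tree_coord_adj (l, k) (l2, k2) \<or> tree_coord_adj (l2, k2) (l, k)"
    by (rule node_arc_adjacent[OF assms(1,2)])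
  then have "l' = l2 \<and> k' = k2"
    using node_inj[OF assms(3,4)] by blast
  with adj show "tree_coord_adj (l, k) (l', k') \<or> tree_coord_adj (l', k') (l, k)"
    by simp
next
  assume "tree_coord_adj (l, k) (l', k') \<or> tree_coord_adj (l', k') (l, k)"
  then show "{node l k, node l' k'} \<in> E"
  proof
    assume "tree_coord_adj (l, k) (l', k')"
    then show ?thesis
      by (rule adjacent_node_edge[OF assms])
  next
    assume "tree_coord_adj (l', k') (l, k)"
    then have "{node l' k', node l k} \<in> E"
      by (rule adjacent_node_edge[OF assms(3,4,1,2)])
    then show ?thesis
      by (simp add: insert_commute)
  qed
qed

lemma nodes_cover_V:
  assumes "connected_graph V E" "v \<in> V"
  shows "\<exists>l k. l \<le> D \<and> k < 2 ^ l \<and> v = node l k"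
proof -
  have "(r, v) \<in> {(x, y). {x, y} \<in> E}\<^sup>*"
    using assms root_in_V unfolding connected_graph_def by blast
  then show ?thesis
  proof (induction rule: rtrancl_induct)
    case base
    then show ?case by force
  next
    case (step y z)
    then obtain l k where lk: "l \<le> D" "k < 2 ^ l" and "y = node l k"
      by blast
    moreover have "arc y (lab y {y, z}) z"
      using step(2) by (simp add: arc_def)
    ultimately obtain l' k' where "l' \<le> D" "k' < 2 ^ l'" "z = node l' k'"
      using node_arc_adjacent[OF lk] by blast
    then show ?case
      by blast
  qed
qed

lemma tree_like_nodes:
  assumes "connected_graph V E"
  shows "tree_like V E (Suc D)"
proof (rule tree_likeI[where nd = "\<lambda>(l, k). node l k"])
  have coords: "x \<in> coords (Suc D) \<longleftrightarrow> fst x \<le> D \<and> snd x < 2 ^ fst x" for x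
    by (auto simp: coords_def)
  show "bij_betw (\<lambda>(l, k). node l k) (coords (Suc D)) V"
  proof (rule bij_betw_imageI)
    show "inj_on (\<lambda>(l, k). node l k) (coords (Suc D))"
      by (rule inj_onI) (use node_inj in \<open>auto simp: coords\<close>)
    show "(\<lambda>(l, k). node l k) ` coords (Suc D) = V"
      using node_in_V_complete nodes_cover_V[OF assms] by (force simp: coords)
  qed
  show "{(\<lambda>(l, k). node l k) x, (\<lambda>(l, k). node l k) y} \<in> E \<longleftrightarrow>
      tree_coord_adj x y \<or> tree_coord_adj y x"
    if "x \<in> coords (Suc D)" "y \<in> coords (Suc D)" for x y
    using that edge_nodes_iff_adjacent[of "fst x" "snd x" "fst y" "snd y"]
    by (simp add: coords case_prod_beta)
qed

end

theorem lemma6p6: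
  fixes V :: "'a set" and E :: "'a set set" and lab :: "'a \<Rightarrow> 'a set \<Rightarrow> label"
  assumes "simple_graph V E"
    and "connected_graph V E"
    and "valid_labeling V E lab"
  shows "tree_like_structure V E"
proof (cases "V = {}")
  case True
  then have "tree_like V E 0"
    by (simp add: tree_like_def)
  then show ?thesis
    unfolding tree_like_structure_def ..
next
  case False
  interpret labelled_graph V E lab
    using assms(1,3) by unfold_locales
  obtain r where r: "r \<in> V" "\<not> (\<exists>p. arc r Pb p)"
    using root_exists[OF False] by blast
  obtain D where "complete D r" "\<not> complete (Suc D) r"
    using root_eventually_incomplete[OF r] complete_exact_depth by blast
  then interpret rooted_labelled_graph_exact V E lab r D
    using r by unfold_locales
  have "tree_like V E (Suc D)"
    using tree_like_nodes assms(2) .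
  then show ?thesis
    unfolding tree_like_structure_def ..
qed

end
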